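(* There exist infinitely many connected graphs $G$, with list-assignments $L$ in which $|L(w)|=\deg(w)$ for one vertex $w$ and $|L(v)|\ge\deg(v)+1$ for all other vertices $v$, such that the number of non-singleton connected components of $\mathcal{C}(G,L)$ is exponential in $|V(G)|$ (i.e. at least $c^{|V(G)|}$ for some constant $c>1$).
   Context: A list-assignment $L$ assigns to each vertex $v$ a finite set $L(v)\subseteq\mathbb{N}$; an $L$-colouring is a proper colouring $\varphi$ with $\varphi(v)\in L(v)$ for all $v$. $\mathcal{C}(G,L)$ is the graph whose vertices are the $L$-colourings of $G$, two being adjacent if one is obtained from the other by changing the colour of a single vertex (to another colour in its list, the result being proper). *)

theory Defs
  imports Complex_Main "HOL-Library.FuncSet"
begin

definition simple_graph :: "'a set \<Rightarrow> ('a \<Rightarrow> 'a \<Rightarrow> bool) \<Rightarrow> bool" where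
  "simple_graph V E \<longleftrightarrow> finite V \<and> (\<forall>u v. E u v \<longrightarrow> u \<in> V \<and> v \<in> V) \<and>
     (\<forall>u v. E u v \<longrightarrow> E v u) \<and> (\<forall>v. \<not> E v v)"

definition connected_graph :: "'a set \<Rightarrow> ('a \<Rightarrow> 'a \<Rightarrow> bool) \<Rightarrow> bool" where
  "connected_graph V E \<longleftrightarrow> V \<noteq> {} \<and> (\<forall>u\<in>V. \<forall>v\<in>V. E\<^sup>*\<^sup>* u v)"

definition degree :: "'a set \<Rightarrow> ('a \<Rightarrow> 'a \<Rightarrow> bool) \<Rightarrow> 'a \<Rightarrow> nat" where
  "degree V E v = card {u\<in>V. E v u}"

text \<open>L-colourings: proper colourings with colours from the lists; functions are
taken extensional (undefined outside V) so that each colouring is represented once.\<close>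
definition L_colourings :: "'a set \<Rightarrow> ('a \<Rightarrow> 'a \<Rightarrow> bool) \<Rightarrow> ('a \<Rightarrow> nat set) \<Rightarrow> ('a \<Rightarrow> nat) set" where
  "L_colourings V E L = {\<phi> \<in> (\<Pi>\<^sub>E v\<in>V. L v). \<forall>u v. E u v \<longrightarrow> \<phi> u \<noteq> \<phi> v}"

definition recol_adj :: "'a set \<Rightarrow> ('a \<Rightarrow> 'a \<Rightarrow> bool) \<Rightarrow> ('a \<Rightarrow> nat set) \<Rightarrow> ('a \<Rightarrow> nat) \<Rightarrow> ('a \<Rightarrow> nat) \<Rightarrow> bool" where
  "recol_adj V E L \<phi> \<psi> \<longleftrightarrow> \<phi> \<in> L_colourings V E L \<and> \<psi> \<in> L_colourings V E L \<and>
     (\<exists>v\<in>V. \<phi> v \<noteq> \<psi> v \<and> (\<forall>u\<in>V. u \<noteq> v \<longrightarrow> \<phi> u = \<psi> u))"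

definition recol_components :: "'a set \<Rightarrow> ('a \<Rightarrow> 'a \<Rightarrow> bool) \<Rightarrow> ('a \<Rightarrow> nat set) \<Rightarrow> ('a \<Rightarrow> nat) set set" where
  "recol_components V E L =
     (\<lambda>\<phi>. {\<psi> \<in> L_colourings V E L. (recol_adj V E L)\<^sup>*\<^sup>* \<phi> \<psi>}) ` L_colourings V E L"

definition nonsingleton_components :: "'a set \<Rightarrow> ('a \<Rightarrow> 'a \<Rightarrow> bool) \<Rightarrow> ('a \<Rightarrow> nat set) \<Rightarrow> ('a \<Rightarrow> nat) set set" where
  "nonsingleton_components V E L = {C \<in> recol_components V E L. \<exists>\<phi>\<in>C. \<exists>\<psi>\<in>C. \<phi> \<noteq> \<psi>}"

end

theory Submission imports Defs begin

text \<open>Take the windmill graph of \<open>k\<close> triangles sharing a hub \<open>w\<close>, together with a pendant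
vertex at \<open>w\<close>. The hub gets colour 0 and the \<open>2k\<close> colours of the triangle vertices; a triangle
vertex \<open>v\<close> with partner \<open>v'\<close> gets \<open>{0, v, v'}\<close>; the pendant gets \<open>1\<close> and a fresh colour.
Colouring the hub 0, the pendant 1 and each triangle in one of its two orientations gives \<open>2^k\<close>
colourings in which every vertex but the pendant is frozen: each alternative colour of such a vertex
is taken by a neighbour that is itself frozen. These colourings therefore lie in distinct
components of \<open>C(G,L)\<close>, each non-singleton because the pendant can switch colour, and
\<open>2^k \<ge> (9/8)^(2k+2)\<close>.\<close>

lemma recol_adj_imp_fun_upd:
  assumes "recol_adj V E L \<phi> \<psi>"
  shows "\<exists>x\<in>V. \<psi> x \<noteq> \<phi> x \<and> \<psi> = \<phi>(x := \<psi> x)"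
proof -
  obtain x where x: "x \<in> V" "\<phi> x \<noteq> \<psi> x" and agree: "\<forall>u\<in>V. u \<noteq> x \<longrightarrow> \<phi> u = \<psi> u"
    using assms by (auto simp: recol_adj_def)
  have "\<phi> \<in> (\<Pi>\<^sub>E v\<in>V. L v)" "\<psi> \<in> (\<Pi>\<^sub>E v\<in>V. L v)"
    using assms by (auto simp: recol_adj_def L_colourings_def)
  then have "\<psi> = \<phi>(x := \<psi> x)"
    using agree by (intro ext) (metis PiE_arb fun_upd_apply)
  with x show ?thesis by (metis)
qed

lemma recol_adj_fun_upd:
  assumes "\<phi> \<in> L_colourings V E L" "x \<in> V" "c \<in> L x" "c \<noteq> \<phi> x"
    and "\<And>u. E x u \<or> E u x \<Longrightarrow> \<phi> u \<noteq> c"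
  shows "recol_adj V E L \<phi> (\<phi>(x := c))"
proof -
  have "\<phi>(x := c) \<in> (\<Pi>\<^sub>E v\<in>V. L v)"
    using assms(1-3) by (auto simp: L_colourings_def intro: PiE_fun_upd)
  moreover have "(\<phi>(x := c)) u \<noteq> (\<phi>(x := c)) v" if "E u v" for u v
    using that assms(1,5) by (auto simp: L_colourings_def)
  ultimately show ?thesis
    using assms(1,2,4) by (auto simp: recol_adj_def L_colourings_def)
qed

definition frozen_on :: "('a \<Rightarrow> 'a \<Rightarrow> bool) \<Rightarrow> ('a \<Rightarrow> nat set) \<Rightarrow> ('a \<Rightarrow> nat) \<Rightarrow> 'a set \<Rightarrow> bool" where
  "frozen_on E L \<phi> F \<longleftrightarrow> (\<forall>x\<in>F. \<forall>c\<in>L x - {\<phi> x}. \<exists>u\<in>F. E x u \<and> \<phi> u = c)"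

lemma recol_reachable_agree_on_frozen:
  assumes frozen: "frozen_on E L \<phi> F"
    and reach: "(recol_adj V E L)\<^sup>*\<^sup>* \<phi> \<psi>"
  shows "\<forall>x\<in>F. \<psi> x = \<phi> x"
  using reach
proof (induction rule: rtranclp_induct)
  case base
  then show ?case by simp
next
  case (step \<psi> \<psi>')
  obtain y where y: "y \<in> V" "\<psi>' y \<noteq> \<psi> y" and upd: "\<psi>' = \<psi>(y := \<psi>' y)"
    using recol_adj_imp_fun_upd[OF step.hyps(2)] by blast
  have colouring: "\<psi>' \<in> L_colourings V E L"
    using step.hyps(2) by (simp add: recol_adj_def)
  have "y \<notin> F"
  proof
    assume "y \<in> F"
    have "\<psi>' y \<in> L y - {\<phi> y}"
      using colouring y step.IH \<open>y \<in> F\<close> by (auto simp: L_colourings_def)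
    then obtain u where u: "u \<in> F" "E y u" "\<phi> u = \<psi>' y"
      using frozen \<open>y \<in> F\<close> unfolding frozen_on_def by blast
    then have "u \<noteq> y" using y step.IH \<open>y \<in> F\<close> by auto
    then have "\<psi>' u = \<psi>' y"
      using u step.IH upd by (metis fun_upd_other)
    with u(2) colouring show False by (simp add: L_colourings_def) metis
  qed
  then show ?case using step.IH upd by (metis fun_upd_other)
qed

definition recol_component :: "'a set \<Rightarrow> ('a \<Rightarrow> 'a \<Rightarrow> bool) \<Rightarrow> ('a \<Rightarrow> nat set) \<Rightarrow> ('a \<Rightarrow> nat) \<Rightarrow> ('a \<Rightarrow> nat) set" where
  "recol_component V E L \<phi> = {\<psi> \<in> L_colourings V E L. (recol_adj V E L)\<^sup>*\<^sup>* \<phi> \<psi>}"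

lemma recol_component_in_nonsingleton_components:
  assumes "\<phi> \<in> L_colourings V E L" "recol_adj V E L \<phi> \<psi>"
  shows "recol_component V E L \<phi> \<in> nonsingleton_components V E L"
proof -
  have "recol_component V E L \<phi> \<in> recol_components V E L"
    using assms(1) by (auto simp: recol_components_def recol_component_def)
  moreover have "\<phi> \<in> recol_component V E L \<phi>" "\<psi> \<in> recol_component V E L \<phi>"
    using assms r_into_rtranclp[of "recol_adj V E L", OF assms(2)]
    by (auto simp: recol_component_def recol_adj_def)
  moreover have "\<phi> \<noteq> \<psi>"
    using assms(2) by (auto simp: recol_adj_def)
  ultimately show ?thesis
    unfolding nonsingleton_components_def by blast
qed

lemma finite_nonsingleton_components:
  assumes "finite V" "\<forall>v\<in>V. finite (L v)"
  shows "finite (nonsingleton_components V E L)"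
proof -
  have "finite (\<Pi>\<^sub>E v\<in>V. L v)"
    using assms by (intro finite_PiE) auto
  then have "finite (L_colourings V E L)"
    by (rule rev_finite_subset) (auto simp: L_colourings_def)
  moreover have "nonsingleton_components V E L \<subseteq> Pow (L_colourings V E L)"
    by (auto simp: nonsingleton_components_def recol_components_def)
  ultimately show ?thesis
    by (meson finite_Pow_iff rev_finite_subset)
qed

text \<open>Colourings that are frozen on \<open>F\<close> and differ on \<open>F\<close> cannot reach each other.\<close>

lemma card_le_card_nonsingleton_components:
  assumes "finite V" "\<forall>v\<in>V. finite (L v)"
    and colouring: "\<And>i. i \<in> I \<Longrightarrow> \<phi> i \<in> L_colourings V E L"
    and movable: "\<And>i. i \<in> I \<Longrightarrow> \<exists>\<psi>. recol_adj V E L (\<phi> i) \<psi>"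
    and frozen: "\<And>i. i \<in> I \<Longrightarrow> frozen_on E L (\<phi> i) F"
    and distinct: "\<And>i j. i \<in> I \<Longrightarrow> j \<in> I \<Longrightarrow> \<forall>x\<in>F. \<phi> i x = \<phi> j x \<Longrightarrow> i = j"
  shows "card I \<le> card (nonsingleton_components V E L)"
proof (rule card_inj_on_le)
  show "inj_on (recol_component V E L \<circ> \<phi>) I"
  proof (rule inj_onI)
    fix i j assume ij: "i \<in> I" "j \<in> I"
      and "(recol_component V E L \<circ> \<phi>) i = (recol_component V E L \<circ> \<phi>) j"
    then have "\<phi> j \<in> recol_component V E L (\<phi> i)"
      using colouring by (simp add: recol_component_def)
    then have "\<forall>x\<in>F. \<phi> j x = \<phi> i x"
      using recol_reachable_agree_on_frozen[OF frozen[OF ij(1)]] by (auto simp: recol_component_def)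
    then show "i = j" using distinct ij by simp
  qed
  show "(recol_component V E L \<circ> \<phi>) ` I \<subseteq> nonsingleton_components V E L"
    using colouring movable recol_component_in_nonsingleton_components by fastforce
  show "finite (nonsingleton_components V E L)"
    using assms(1,2) by (rule finite_nonsingleton_components)
qed

text \<open>Vertex 0 is the hub, vertex 1 the pendant vertex, and triangle \<open>i < k\<close> is
\<open>{0, 2i+2, 2i+3}\<close>, so \<open>i = v div 2 - 1\<close> for its non-hub vertices \<open>v\<close>; \<open>partner\<close> swaps
these two vertices.\<close>

definition partner :: "nat \<Rightarrow> nat" where
  "partner v = (if even v then v + 1 else v - 1)"

definition windmill_vertices :: "nat \<Rightarrow> nat set" where
  "windmill_vertices k = {..<2*k+2}"

definition windmill_edge :: "nat \<Rightarrow> nat \<Rightarrow> nat \<Rightarrow> bool" where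
  "windmill_edge k u v \<longleftrightarrow> u \<in> windmill_vertices k \<and> v \<in> windmill_vertices k \<and> u \<noteq> v \<and>
     (u = 0 \<or> v = 0 \<or> (2 \<le> u \<and> 2 \<le> v \<and> v = partner u))"

definition windmill_lists :: "nat \<Rightarrow> nat \<Rightarrow> nat set" where
  "windmill_lists k v =
     (if v = 0 then insert 0 {2..<2*k+2} else if v = 1 then {1, 2*k+2} else {0, v, partner v})"

lemma partner_neq [simp]: "partner v \<noteq> v" "v \<noteq> partner v"
  unfolding partner_def by presburger+

lemma partner_partner [simp]: "partner (partner v) = v"
  by (simp add: partner_def)

lemma partner_eq_iff: "v = partner u \<longleftrightarrow> u = partner v"
  by (metis partner_partner)

lemma partner_ge_2: "2 \<le> v \<Longrightarrow> 2 \<le> partner v"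
  unfolding partner_def by presburger

lemma partner_div_2 [simp]: "partner v div 2 = v div 2"
  by (auto simp: partner_def elim!: oddE)

lemma partner_in_windmill_vertices:
  "v \<in> windmill_vertices k \<Longrightarrow> partner v \<in> windmill_vertices k"
  unfolding partner_def windmill_vertices_def by simp presburger

lemma hub_pendant_in_windmill_vertices [simp]:
  "0 \<in> windmill_vertices k" "Suc 0 \<in> windmill_vertices k"
  by (auto simp: windmill_vertices_def)

lemma card_windmill_vertices: "card (windmill_vertices k) = 2*k+2"
  by (simp add: windmill_vertices_def)

lemma simple_graph_windmill: "simple_graph (windmill_vertices k) (windmill_edge k)"
  unfolding simple_graph_def windmill_edge_def
  by (auto simp: windmill_vertices_def partner_eq_iff intro: partner_ge_2)

lemma connected_graph_windmill: "connected_graph (windmill_vertices k) (windmill_edge k)"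
  unfolding connected_graph_def
proof (intro conjI ballI)
  show "windmill_vertices k \<noteq> {}" using hub_pendant_in_windmill_vertices by blast
  have to_hub: "(windmill_edge k)\<^sup>*\<^sup>* u 0" and from_hub: "(windmill_edge k)\<^sup>*\<^sup>* 0 u"
    if "u \<in> windmill_vertices k" for u
    using that by (cases "u = 0"; auto simp: windmill_edge_def intro!: r_into_rtranclp)+
  fix u v assume "u \<in> windmill_vertices k" "v \<in> windmill_vertices k"
  then show "(windmill_edge k)\<^sup>*\<^sup>* u v"
    using to_hub from_hub by (meson rtranclp_trans)
qed

lemma windmill_neighbours:
  assumes "v \<in> windmill_vertices k"
  shows "{u \<in> windmill_vertices k. windmill_edge k v u} =
    (if v = 0 then windmill_vertices k - {0} else if v = 1 then {0} else {0, partner v})"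
  using assms partner_in_windmill_vertices[OF assms] partner_ge_2[of v]
  by (auto simp: windmill_edge_def partner_eq_iff windmill_vertices_def)

lemma finite_windmill_lists [simp]: "finite (windmill_lists k v)"
  by (simp add: windmill_lists_def)

lemma card_windmill_lists_hub:
  "card (windmill_lists k 0) = degree (windmill_vertices k) (windmill_edge k) 0"
  unfolding degree_def windmill_neighbours[OF hub_pendant_in_windmill_vertices(1)]
  by (simp add: windmill_lists_def windmill_vertices_def)

lemma card_windmill_lists_non_hub:
  assumes "v \<in> windmill_vertices k" "v \<noteq> 0"
  shows "card (windmill_lists k v) = degree (windmill_vertices k) (windmill_edge k) v + 1"
  unfolding degree_def windmill_neighbours[OF assms(1)]
  using assms partner_ge_2[of v] by (auto simp: windmill_lists_def)

definition windmill_colouring :: "nat \<Rightarrow> nat set \<Rightarrow> nat \<Rightarrow> nat" where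
  "windmill_colouring k S = restrict
     (\<lambda>v. if v = 0 then 0 else if v = 1 then 1 else if v div 2 - 1 \<in> S then v else partner v)
     (windmill_vertices k)"

lemma windmill_colouring_hub_pendant [simp]:
  "windmill_colouring k S 0 = 0" "windmill_colouring k S (Suc 0) = 1"
  by (simp_all add: windmill_colouring_def)

lemma windmill_colouring_triangle:
  "v \<in> windmill_vertices k \<Longrightarrow> 2 \<le> v \<Longrightarrow>
    windmill_colouring k S v = (if v div 2 - 1 \<in> S then v else partner v)"
  by (simp add: windmill_colouring_def)

lemma windmill_colouring_partner:
  "v \<in> windmill_vertices k \<Longrightarrow> 2 \<le> v \<Longrightarrow>
    windmill_colouring k S (partner v) = partner (windmill_colouring k S v)"
  using partner_in_windmill_vertices partner_ge_2 by (simp add: windmill_colouring_triangle)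

lemma windmill_colouring_in_L_colourings:
  "windmill_colouring k S \<in> L_colourings (windmill_vertices k) (windmill_edge k) (windmill_lists k)"
proof -
  let ?\<phi> = "windmill_colouring k S"
  have "?\<phi> \<in> (\<Pi>\<^sub>E v\<in>windmill_vertices k. windmill_lists k v)"
    by (auto simp: windmill_colouring_def windmill_lists_def)
  moreover have "?\<phi> u \<noteq> ?\<phi> v" if "windmill_edge k u v" for u v
  proof -
    have nonzero: "?\<phi> x \<noteq> 0" if "x \<in> windmill_vertices k" "x \<noteq> 0" for x
      using that partner_ge_2[of x] by (cases "x = 1") (auto simp: windmill_colouring_triangle)
    show ?thesis
    proof (cases "u = 0 \<or> v = 0")
      case True
      then show ?thesis using \<open>windmill_edge k u v\<close> nonzero
        by (metis windmill_edge_def windmill_colouring_hub_pendant(1))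
    next
      case False
      then show ?thesis using \<open>windmill_edge k u v\<close>
        by (auto simp: windmill_edge_def windmill_colouring_partner)
    qed
  qed
  ultimately show ?thesis by (simp add: L_colourings_def)
qed

lemma frozen_on_windmill_colouring:
  "frozen_on (windmill_edge k) (windmill_lists k) (windmill_colouring k S) (windmill_vertices k - {1})"
  unfolding frozen_on_def
proof (intro ballI)
  let ?\<phi> = "windmill_colouring k S"
  fix x c assume x: "x \<in> windmill_vertices k - {1}" and c: "c \<in> windmill_lists k x - {?\<phi> x}"
  show "\<exists>u\<in>windmill_vertices k - {1}. windmill_edge k x u \<and> ?\<phi> u = c"
  proof (cases "x = 0")
    case True
    then have c_triangle: "c \<in> windmill_vertices k" "2 \<le> c"
      using c by (auto simp: windmill_lists_def windmill_vertices_def)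
    define u where "u = (if c div 2 - 1 \<in> S then c else partner c)"
    have u: "u \<in> windmill_vertices k" "2 \<le> u"
      using c_triangle partner_in_windmill_vertices partner_ge_2 by (auto simp: u_def)
    moreover have "?\<phi> u = c"
      using c_triangle u by (auto simp: u_def windmill_colouring_triangle)
    ultimately show ?thesis
      using True by (intro bexI[of _ u]) (auto simp: windmill_edge_def)
  next
    case False
    with x have x_triangle: "x \<in> windmill_vertices k" "2 \<le> x" by auto
    then have "c = 0 \<or> c = partner (?\<phi> x)"
      using c by (auto simp: windmill_lists_def windmill_colouring_triangle split: if_splits)
    then show ?thesis
    proof
      assume "c = 0"
      then show ?thesis
        using x_triangle by (intro bexI[of _ 0]) (auto simp: windmill_edge_def)
    next
      assume "c = partner (?\<phi> x)"
      then show ?thesis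
        using x_triangle partner_in_windmill_vertices partner_ge_2[of x]
        by (intro bexI[of _ "partner x"]) (auto simp: windmill_edge_def windmill_colouring_partner)
    qed
  qed
qed

lemma recol_adj_windmill_colouring:
  "recol_adj (windmill_vertices k) (windmill_edge k) (windmill_lists k)
    (windmill_colouring k S) ((windmill_colouring k S)(1 := 2*k+2))"
  by (rule recol_adj_fun_upd)
    (auto simp: windmill_colouring_in_L_colourings windmill_lists_def windmill_edge_def)

lemma windmill_colouring_eq_imp_eq:
  assumes "S \<subseteq> {..<k}" "T \<subseteq> {..<k}"
    and agree: "\<forall>v\<in>windmill_vertices k - {1}. windmill_colouring k S v = windmill_colouring k T v"
  shows "S = T"
proof -
  have "i \<in> S \<longleftrightarrow> i \<in> T" if "i < k" for i
  proof -
    have v: "2*i+2 \<in> windmill_vertices k" "2 \<le> 2*i+2"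
      using that by (auto simp: windmill_vertices_def)
    then have "windmill_colouring k S (2*i+2) = windmill_colouring k T (2*i+2)"
      using agree by simp
    then show ?thesis
      using windmill_colouring_triangle[OF v] by (auto split: if_splits)
  qed
  with assms(1,2) show ?thesis by blast
qed

lemma two_power_le_card_nonsingleton_components_windmill:
  "2^k \<le> card (nonsingleton_components (windmill_vertices k) (windmill_edge k) (windmill_lists k))"
proof -
  have "card (Pow {..<k}) \<le>
      card (nonsingleton_components (windmill_vertices k) (windmill_edge k) (windmill_lists k))"
  proof (rule card_le_card_nonsingleton_components[where \<phi> = "windmill_colouring k"
        and F = "windmill_vertices k - {1}"])
    show "finite (windmill_vertices k)" by (simp add: windmill_vertices_def)
    show "\<And>S. frozen_on (windmill_edge k) (windmill_lists k) (windmill_colouring k S)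
        (windmill_vertices k - {1})"
      by (rule frozen_on_windmill_colouring)
    show "\<And>S T. S \<in> Pow {..<k} \<Longrightarrow> T \<in> Pow {..<k} \<Longrightarrow>
        \<forall>v\<in>windmill_vertices k - {1}. windmill_colouring k S v = windmill_colouring k T v \<Longrightarrow> S = T"
      using windmill_colouring_eq_imp_eq by blast
  qed (auto simp: windmill_lists_def windmill_colouring_in_L_colourings
        intro: recol_adj_windmill_colouring)
  then show ?thesis by (simp add: card_Pow)
qed

lemma nine_eighths_power_le_two_power:
  assumes "1 \<le> k"
  shows "(9/8::real)^(2*k+2) \<le> 2^k"
  using assms
proof (induction k rule: dec_induct)
  case base
  then show ?case by (simp add: eval_nat_numeral)
next
  case (step n)
  have "(9/8::real)^(2*Suc n+2) = 81/64 * (9/8)^(2*n+2)"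
    by (simp add: power_add power_mult)
  also have "\<dots> \<le> 2 * 2^n"
    using step.IH zero_le_power[of "2::real" n] by linarith
  finally show ?case by simp
qed

lemma nine_eighths_power_le_card_nonsingleton_components_windmill:
  assumes "1 \<le> k"
  shows "(9/8::real) ^ card (windmill_vertices k) \<le>
    card (nonsingleton_components (windmill_vertices k) (windmill_edge k) (windmill_lists k))"
proof -
  have "(9/8::real) ^ card (windmill_vertices k) \<le> 2^k"
    using nine_eighths_power_le_two_power[OF assms] by (simp add: card_windmill_vertices)
  also have "(2::real)^k \<le>
      card (nonsingleton_components (windmill_vertices k) (windmill_edge k) (windmill_lists k))"
    using two_power_le_card_nonsingleton_components_windmill[of k] by (simp flip: of_nat_le_iff)
  finally show ?thesis .
qed

theorem mainTheorem3:
  "\<exists>c::real. c > 1 \<and>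
     (\<forall>N::nat. \<exists>(V::nat set) E L w.
        card V \<ge> N \<and> simple_graph V E \<and> connected_graph V E \<and>
        w \<in> V \<and> (\<forall>v\<in>V. finite (L v)) \<and>
        card (L w) = degree V E w \<and>
        (\<forall>v\<in>V. v \<noteq> w \<longrightarrow> card (L v) \<ge> degree V E v + 1) \<and>
        real (card (nonsingleton_components V E L)) \<ge> c ^ card V)"
  apply (intro exI[of _ "9/8"] conjI allI)
   apply simp
  subgoal for N
    using simple_graph_windmill connected_graph_windmill card_windmill_lists_hub
      card_windmill_lists_non_hub
      nine_eighths_power_le_card_nonsingleton_components_windmill[of "N + 1"]
    by (intro exI[of _ "windmill_vertices (N + 1)"] exI[of _ "windmill_edge (N + 1)"]
        exI[of _ "windmill_lists (N + 1)"] exI[of _ 0] conjI)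
      (simp_all add: card_windmill_vertices)
  done

end
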